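(* Let $\mathcal{M}=\{1,\dots,M\}$ be masters and $\mathcal{N}=\{1,\dots,N\}$ workers, $N>M$, with parameters $L_m>0$, $u_{m,n}>0$, $a_{m,n}>0$. For $k_{m,n}\in\{0,1\}$ and $l_{m,n}\ge 0$ define $$\mathbb{E}[X_m(t)]=\sum_{n=1}^N \mathbb{E}[X_{m,n}(t)],\qquad \mathbb{E}[X_{m,n}(t)]=\begin{cases}k_{m,n}l_{m,n}\left[1-e^{-\frac{u_{m,n}}{l_{m,n}}(t-a_{m,n}l_{m,n})}\right], & k_{m,n}>0,\ t\ge a_{m,n}l_{m,n},\\ 0,&\text{otherwise}.\end{cases}$$ Consider the dedicated worker-assignment problem $$\mathcal{P}2:\ \min_{\{l_{m,n},k_{m,n},t\}} t\quad\text{s.t.}\quad L_m-\mathbb{E}[X_m(t)]\le 0\ \forall m,\quad \sum_{m=1}^M k_{m,n}\le 1\ \forall n,\quad k_{m,n}\in\{0,1\},\ l_{m,n}\ge 0\ \forall m,n.$$ Let $\phi_{m,n}=\frac{1}{u_{m,n}}\left[-\mathcal{W}_{-1}(-e^{-u_{m,n}a_{m,n}-1})-1\right]$, where $\mathcal{W}_{-1}$ is the lower branch of the Lambert W function, and $v_{m,n}=\frac{u_{m,n}}{L_m(1+u_{m,n}\phi_{m,n})}$. Then $\mathcal{P}2$ is equivalent to the max-min allocation problem $$\mathcal{P}5:\ \max_{\{k_{m,n}\}}\ \min_{m\in\mathcal{M}}\sum_{n=1}^N k_{m,n}v_{m,n}\quad\text{s.t.}\quad \sum_{m=1}^M k_{m,n}\le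 1,\ k_{m,n}\in\{0,1\}\ \forall m,n,$$ in the sense that minimizing over loads for each fixed assignment, the minimum value of $t$ for the assignment $\{k_{m,n}\}$ equals $1/\min_{m}\sum_n k_{m,n}v_{m,n}$; hence an assignment is optimal for $\mathcal{P}2$ iff it is optimal for $\mathcal{P}5$, and the optimal value of $\mathcal{P}2$ is the reciprocal of that of $\mathcal{P}5$.
   Context: Each master $m$ has a matrix-vector multiplication task with $L_m$ rows, MDS-coded; worker $n$ is dedicated to at most one master ($k_{m,n}=1$ iff worker $n$ serves master $m$) and computes $l_{m,n}$ coded rows; the processing time of worker $n$ on $l$ rows for master $m$ is shifted exponential with $\mathbb{P}[T\le t]=1-e^{-\frac{u_{m,n}}{l}(t-a_{m,n}l)}$ for $t\ge a_{m,n}l$. A master receives either all $l_{m,n}$ results of worker $n$ or none by time $t$; $X_m(t)$ is the number of results master $m$ has by time $t$. *)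

theory Defs
  imports "HOL-Analysis.Analysis"
begin

definition lambertW_m1 :: "real \<Rightarrow> real" where
  "lambertW_m1 x = (THE w. w \<le> -1 \<and> w * exp w = x)"

definition EXmn :: "real \<Rightarrow> real \<Rightarrow> real \<Rightarrow> real \<Rightarrow> real \<Rightarrow> real" where
  "EXmn u a k l t =
     (if k > 0 \<and> t \<ge> a * l then k * l * (1 - exp (- (u / l) * (t - a * l))) else 0)"

definition EXm :: "nat \<Rightarrow> (nat \<Rightarrow> nat \<Rightarrow> real) \<Rightarrow> (nat \<Rightarrow> nat \<Rightarrow> real)
     \<Rightarrow> (nat \<Rightarrow> nat \<Rightarrow> real) \<Rightarrow> (nat \<Rightarrow> nat \<Rightarrow> real) \<Rightarrow> nat \<Rightarrow> real \<Rightarrow> real" where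
  "EXm N u a k l m t = (\<Sum>n = 1..N. EXmn (u m n) (a m n) (k m n) (l m n) t)"

definition valid_assign :: "nat \<Rightarrow> nat \<Rightarrow> (nat \<Rightarrow> nat \<Rightarrow> real) \<Rightarrow> bool" where
  "valid_assign M N k \<longleftrightarrow>
     (\<forall>m\<in>{1..M}. \<forall>n\<in>{1..N}. k m n \<in> {0, 1}) \<and> (\<forall>n\<in>{1..N}. (\<Sum>m = 1..M. k m n) \<le> 1)"

definition P2_feasible :: "nat \<Rightarrow> nat \<Rightarrow> (nat \<Rightarrow> real) \<Rightarrow> (nat \<Rightarrow> nat \<Rightarrow> real) \<Rightarrow> (nat \<Rightarrow> nat \<Rightarrow> real)
     \<Rightarrow> (nat \<Rightarrow> nat \<Rightarrow> real) \<Rightarrow> (nat \<Rightarrow> nat \<Rightarrow> real) \<Rightarrow> real \<Rightarrow> bool" where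
  "P2_feasible M N L u a k l t \<longleftrightarrow>
     valid_assign M N k \<and> (\<forall>m\<in>{1..M}. \<forall>n\<in>{1..N}. l m n \<ge> 0) \<and>
     (\<forall>m\<in>{1..M}. L m - EXm N u a k l m t \<le> 0)"

definition P2_optimal :: "nat \<Rightarrow> nat \<Rightarrow> (nat \<Rightarrow> real) \<Rightarrow> (nat \<Rightarrow> nat \<Rightarrow> real) \<Rightarrow> (nat \<Rightarrow> nat \<Rightarrow> real)
     \<Rightarrow> (nat \<Rightarrow> nat \<Rightarrow> real) \<Rightarrow> (nat \<Rightarrow> nat \<Rightarrow> real) \<Rightarrow> real \<Rightarrow> bool" where
  "P2_optimal M N L u a k l t \<longleftrightarrow>
     P2_feasible M N L u a k l t \<and> (\<forall>k' l' t'. P2_feasible M N L u a k' l' t' \<longrightarrow> t \<le> t')"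

definition phi :: "real \<Rightarrow> real \<Rightarrow> real" where
  "phi u a = (1 / u) * (- lambertW_m1 (- exp (- u * a - 1)) - 1)"

definition vv :: "(nat \<Rightarrow> real) \<Rightarrow> (nat \<Rightarrow> nat \<Rightarrow> real) \<Rightarrow> (nat \<Rightarrow> nat \<Rightarrow> real) \<Rightarrow> nat \<Rightarrow> nat \<Rightarrow> real" where
  "vv L u a m n = u m n / (L m * (1 + u m n * phi (u m n) (a m n)))"

definition P5_obj :: "nat \<Rightarrow> nat \<Rightarrow> (nat \<Rightarrow> nat \<Rightarrow> real) \<Rightarrow> (nat \<Rightarrow> nat \<Rightarrow> real) \<Rightarrow> real" where
  "P5_obj M N v k = Min ((\<lambda>m. \<Sum>n = 1..N. k m n * v m n) ` {1..M})"

definition P5_optimal :: "nat \<Rightarrow> nat \<Rightarrow> (nat \<Rightarrow> nat \<Rightarrow> real) \<Rightarrow> (nat \<Rightarrow> nat \<Rightarrow> real) \<Rightarrow> bool" where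
  "P5_optimal M N v k \<longleftrightarrow>
     valid_assign M N k \<and> (\<forall>k'. valid_assign M N k' \<longrightarrow> P5_obj M N v k' \<le> P5_obj M N v k)"

end

theory Submission
  imports Defs "HOL-Real_Asymp.Real_Asymp"
begin

(*
  A worker that computes l rows by time t works at a per-row time y = t / l and delivers in
  expectation t (1 - exp (u (a - y))) / y results. Convexity of exp bounds 1 - exp (u (a - y))
  by its tangent through the origin, u y / (1 + u phi); the tangency point phi solves
  exp (u (a - phi)) (1 + u phi) = 1, which is where the Lambert function comes from. Hence a
  worker contributes at most t u / (1 + u phi) results, with equality for the load t / phi.
*)

lemma x_exp_x_strict_antimono:
  fixes w1 w2 :: real
  assumes "w1 < w2" "w2 \<le> -1"
  shows "w2 * exp w2 < w1 * exp w1"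
proof -
  have "(\<lambda>w. w * exp w) w2 < (\<lambda>w. w * exp w) w1"
  proof (rule DERIV_neg_imp_decreasing_open[OF assms(1)])
    fix x :: real assume "w1 < x" "x < w2"
    then have "(1 + x) * exp x < 0"
      using assms(2) by (simp add: mult_neg_pos)
    moreover have "((\<lambda>w. w * exp w) has_real_derivative (1 + x) * exp x) (at x)"
      by (auto intro!: derivative_eq_intros simp: algebra_simps)
    ultimately show "\<exists>y. ((\<lambda>w. w * exp w) has_real_derivative y) (at x) \<and> y < 0"
      by blast
  qed (intro continuous_intros)
  then show ?thesis by simp
qed

lemma lambertW_m1:
  assumes "- exp (-1) \<le> x" "x < 0"
  shows lambertW_m1_le: "lambertW_m1 x \<le> -1"
    and lambertW_m1_eq: "lambertW_m1 x * exp (lambertW_m1 x) = x"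
proof -
  have "((\<lambda>w::real. w * exp w) \<longlongrightarrow> 0) at_bot"
    by real_asymp
  then have "eventually (\<lambda>w. x < w * exp w) at_bot"
    using assms(2) by (rule order_tendstoD)
  then obtain b where b: "b \<le> -1" "x < b * exp b"
    unfolding eventually_at_bot_linorder by (metis min.cobounded1 min.cobounded2)
  then obtain w where w: "w \<le> -1" "w * exp w = x"
    using IVT2[of "\<lambda>w. w * exp w" "-1" x b] assms(1)
    by (auto intro!: continuous_intros)
  have "lambertW_m1 x = w"
    unfolding lambertW_m1_def
  proof (rule the_equality)
    fix w' assume "w' \<le> -1 \<and> w' * exp w' = x"
    then show "w' = w"
      using x_exp_x_strict_antimono[of w' w] x_exp_x_strict_antimono[of w w'] w
      by (cases w' w rule: linorder_cases) auto
  qed (use w in simp)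
  with w show "lambertW_m1 x \<le> -1" "lambertW_m1 x * exp (lambertW_m1 x) = x"
    by simp_all
qed

lemma phi:
  assumes "0 < u" "0 < a"
  shows phi_gt: "a < phi u a"
    and phi_tangency: "exp (u * (a - phi u a)) * (1 + u * phi u a) = 1"
proof -
  define s where "s = u * a + 1"
  define w where "w = lambertW_m1 (- exp (- s))"
  have "1 < s"
    using assms by (simp add: s_def)
  then have "- exp (-1) \<le> - exp (- s)" "- exp (- s) < 0"
    by auto
  then have w: "w \<le> -1" "w * exp w = - exp (- s)"
    unfolding w_def by (rule lambertW_m1_le, rule lambertW_m1_eq)
  have u_phi: "u * phi u a = - w - 1"
    using assms by (simp add: phi_def w_def s_def)
  have "- s * exp (- s) < w * exp w"
    using w(2) \<open>1 < s\<close> by simp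
  then have "w < - s"
    using x_exp_x_strict_antimono[of "- s" w] w(1) \<open>1 < s\<close>
    by (cases w "- s" rule: linorder_cases) auto
  then have "u * a < u * phi u a"
    using u_phi by (simp add: s_def)
  then show "a < phi u a"
    using assms(1) by simp
  have "exp (u * (a - phi u a)) * (1 + u * phi u a) = exp (s + w) * (- w)"
    using u_phi by (simp add: s_def algebra_simps)
  also have "\<dots> = - exp s * (w * exp w)"
    by (simp add: exp_add)
  also have "\<dots> = 1"
    using w(2) by (simp flip: exp_add)
  finally show "exp (u * (a - phi u a)) * (1 + u * phi u a) = 1" .
qed

definition throughput :: "real \<Rightarrow> real \<Rightarrow> real" where
  "throughput u a = u / (1 + u * phi u a)"

lemma one_plus_u_phi_pos: "0 < u \<Longrightarrow> 0 < a \<Longrightarrow> 0 < 1 + u * phi u a"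
  using phi_gt[of u a] by (simp add: add_pos_pos)

lemma throughput_pos: "0 < u \<Longrightarrow> 0 < a \<Longrightarrow> 0 < throughput u a"
  using one_plus_u_phi_pos[of u a] by (simp add: throughput_def)

lemma one_minus_exp_le_throughput:
  assumes "0 < u" "0 < a"
  shows "1 - exp (u * (a - y)) \<le> y * throughput u a"
proof -
  let ?p = "phi u a"
  have "exp (u * (a - ?p)) * (1 + u * (?p - y)) \<le> exp (u * (a - ?p)) * exp (u * (?p - y))"
    by (intro mult_left_mono exp_ge_add_one_self) simp
  also have "\<dots> = exp (u * (a - y))"
    by (simp add: algebra_simps flip: exp_add)
  also have "exp (u * (a - ?p)) = 1 / (1 + u * ?p)"
    using phi_tangency[OF assms] one_plus_u_phi_pos[OF assms] by (simp add: eq_divide_eq)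
  finally have "(1 + u * (?p - y)) / (1 + u * ?p) \<le> exp (u * (a - y))"
    by simp
  moreover have "1 - (1 + u * (?p - y)) / (1 + u * ?p) = y * throughput u a"
    using one_plus_u_phi_pos[OF assms] by (simp add: throughput_def field_simps)
  ultimately show ?thesis
    by linarith
qed

lemma one_minus_exp_at_phi: "0 < u \<Longrightarrow> 0 < a \<Longrightarrow> 1 - exp (u * (a - phi u a)) = phi u a * throughput u a"
  using phi_tangency[of u a] one_plus_u_phi_pos[of u a] by (simp add: throughput_def field_simps)

lemma EXmn_le_throughput:
  assumes "0 < u" "0 < a" "k \<in> {0, 1}" "0 \<le> l"
  shows "EXmn u a k l t \<le> k * max t 0 * throughput u a"
proof (cases "k = 1 \<and> a * l \<le> t \<and> l \<noteq> 0")
  case True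
  then have "0 < l"
    using assms(4) by simp
  then have "0 < t"
    using True assms(2) by (meson mult_pos_pos order.strict_trans2)
  then have "EXmn u a k l t = l * (1 - exp (u * (a - t / l)))"
    using True by (simp add: EXmn_def field_simps)
  also have "\<dots> \<le> l * (t / l * throughput u a)"
    using assms \<open>0 < l\<close> by (intro mult_left_mono one_minus_exp_le_throughput) auto
  also have "\<dots> = k * max t 0 * throughput u a"
    using True \<open>0 < l\<close> \<open>0 < t\<close> by simp
  finally show ?thesis .
next
  case False
  then have "EXmn u a k l t = 0"
    using assms(3) by (auto simp: EXmn_def)
  moreover have "0 \<le> k * max t 0 * throughput u a"
    using assms throughput_pos[of u a] by auto
  ultimately show ?thesis by simp
qed

lemma EXmn_at_load_t_div_phi:
  assumes "0 < u" "0 < a" "k \<in> {0, 1}" "0 < t"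
  shows "EXmn u a k (t / phi u a) t = k * t * throughput u a"
proof -
  let ?p = "phi u a"
  have "a < ?p"
    using phi_gt[OF assms(1,2)] .
  then have "a * (t / ?p) \<le> t"
    using assms by (simp add: field_simps)
  moreover have "- (u / (t / ?p)) * (t - a * (t / ?p)) = u * (a - ?p)"
    using assms \<open>a < ?p\<close> by (simp add: field_simps)
  ultimately show ?thesis
    using assms \<open>a < ?p\<close> one_minus_exp_at_phi[OF assms(1,2)] by (auto simp: EXmn_def)
qed

(* Valid assignments are unconstrained outside {1..M} x {1..N}, so there are infinitely many;
   the maximum of P5_obj exists because it takes only finitely many values. *)
lemma P5_obj_in_subset_sums:
  assumes "1 \<le> M" "valid_assign M N k"
  shows "P5_obj M N v k \<in> (\<lambda>(m, A). \<Sum>n\<in>A. v m n) ` ({1..M} \<times> Pow {1..N})"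
proof -
  obtain m where m: "m \<in> {1..M}" "P5_obj M N v k = (\<Sum>n = 1..N. k m n * v m n)"
  proof -
    have "P5_obj M N v k \<in> (\<lambda>m. \<Sum>n = 1..N. k m n * v m n) ` {1..M}"
      unfolding P5_obj_def using assms(1) by (intro Min_in) auto
    then show ?thesis
      using that by blast
  qed
  have "(\<Sum>n = 1..N. k m n * v m n) = (\<Sum>n = 1..N. if k m n = 1 then v m n else 0)"
    using assms(2) m(1) unfolding valid_assign_def by (intro sum.cong) force+
  also have "\<dots> = (\<Sum>n \<in> {n \<in> {1..N}. k m n = 1}. v m n)"
    by (rule sum.inter_filter[symmetric]) simp
  finally show ?thesis
    using m by force
qed

lemma P5_optimal_exists:
  assumes "1 \<le> M"
  shows "\<exists>k. P5_optimal M N v k"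
proof -
  let ?V = "{k. valid_assign M N k}"
  have "P5_obj M N v ` ?V \<subseteq> (\<lambda>(m, A). \<Sum>n\<in>A. v m n) ` ({1..M} \<times> Pow {1..N})"
    using P5_obj_in_subset_sums[OF assms] by blast
  then have fin: "finite (P5_obj M N v ` ?V)"
    by (rule finite_subset) auto
  moreover have "(\<lambda>m n. 0) \<in> ?V"
    by (simp add: valid_assign_def)
  ultimately have "Max (P5_obj M N v ` ?V) \<in> P5_obj M N v ` ?V"
    by (intro Max_in) auto
  then obtain k where "k \<in> ?V" "P5_obj M N v k = Max (P5_obj M N v ` ?V)"
    by force
  then show ?thesis
    using fin unfolding P5_optimal_def by auto
qed

lemma valid_assign_diagonal: "valid_assign M N (\<lambda>m n. if m = n then 1 else 0)"
  by (auto simp: valid_assign_def sum.delta)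

lemma P5_obj_diagonal_pos:
  assumes "1 \<le> M" "M \<le> N" "\<forall>m\<in>{1..M}. \<forall>n\<in>{1..N}. 0 < v m n"
  shows "0 < P5_obj M N v (\<lambda>m n. if m = n then 1 else 0)"
proof -
  have "(\<Sum>n = 1..N. (if m = n then 1 else 0) * v m n) = v m m" if "m \<in> {1..M}" for m
  proof -
    have "(\<Sum>n = 1..N. (if m = n then 1 else 0) * v m n) = (\<Sum>n = 1..N. if m = n then v m n else 0)"
      by (rule sum.cong) auto
    then show ?thesis
      using that assms(2) by (simp add: sum.delta)
  qed
  then show ?thesis
    unfolding P5_obj_def using assms by (subst Min_gr_iff) auto
qed

lemma minimal_time_eq_inverse_maximal_rate:
  fixes F :: "'k \<Rightarrow> 'l \<Rightarrow> real \<Rightarrow> bool" and V :: "'k \<Rightarrow> bool" and P :: "'k \<Rightarrow> real"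
  assumes feasible_bound: "\<And>k l t. F k l t \<Longrightarrow> V k \<and> 0 < P k \<and> 1 / P k \<le> t"
    and feasible_attained: "\<And>k. V k \<Longrightarrow> 0 < P k \<Longrightarrow> \<exists>l. F k l (1 / P k)"
    and max: "V kmax \<and> (\<forall>k. V k \<longrightarrow> P k \<le> P kmax)" and pos: "0 < P kmax"
  shows "(\<exists>l t. F k l t \<and> (\<forall>k' l' t'. F k' l' t' \<longrightarrow> t \<le> t')) \<longleftrightarrow> V k \<and> (\<forall>k'. V k' \<longrightarrow> P k' \<le> P k)"
    and "\<forall>k l t k'. (F k l t \<and> (\<forall>k' l' t'. F k' l' t' \<longrightarrow> t \<le> t')) \<and>
      (V k' \<and> (\<forall>k''. V k'' \<longrightarrow> P k'' \<le> P k')) \<longrightarrow> t = 1 / P k'"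
proof -
  have optimum: "t = 1 / P kmax \<and> V k \<and> P k = P kmax"
    if "F k l t" "\<forall>k' l' t'. F k' l' t' \<longrightarrow> t \<le> t'" for k l t
  proof -
    have "V k" "0 < P k" "1 / P k \<le> t"
      using feasible_bound[OF that(1)] by auto
    moreover have "t \<le> 1 / P kmax"
      using feasible_attained[OF conjunct1[OF max] pos] that(2) by blast
    moreover have "1 / P kmax \<le> 1 / P k"
      using \<open>0 < P k\<close> max \<open>V k\<close> by (intro divide_left_mono) auto
    ultimately have "t = 1 / P kmax" "1 / P k = 1 / P kmax"
      by linarith+
    with \<open>V k\<close> show ?thesis
      by simp
  qed
  show "(\<exists>l t. F k l t \<and> (\<forall>k' l' t'. F k' l' t' \<longrightarrow> t \<le> t')) \<longleftrightarrow> V k \<and> (\<forall>k'. V k' \<longrightarrow> P k' \<le> P k)"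
  proof
    assume "\<exists>l t. F k l t \<and> (\<forall>k' l' t'. F k' l' t' \<longrightarrow> t \<le> t')"
    then show "V k \<and> (\<forall>k'. V k' \<longrightarrow> P k' \<le> P k)"
      using optimum max by metis
  next
    assume k: "V k \<and> (\<forall>k'. V k' \<longrightarrow> P k' \<le> P k)"
    then have "0 < P k"
      using max pos by force
    then obtain l where "F k l (1 / P k)"
      using feasible_attained k by blast
    moreover have "1 / P k \<le> t'" if "F k' l' t'" for k' l' t'
    proof -
      have "1 / P k \<le> 1 / P k'"
        using feasible_bound[OF that] k by (intro divide_left_mono) auto
      then show ?thesis
        using feasible_bound[OF that] by linarith
    qed
    ultimately show "\<exists>l t. F k l t \<and> (\<forall>k' l' t'. F k' l' t' \<longrightarrow> t \<le> t')"
      by blast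
  qed
  show "\<forall>k l t k'. (F k l t \<and> (\<forall>k' l' t'. F k' l' t' \<longrightarrow> t \<le> t')) \<and>
      (V k' \<and> (\<forall>k''. V k'' \<longrightarrow> P k'' \<le> P k')) \<longrightarrow> t = 1 / P k'"
    using optimum max by (metis order_antisym)
qed

locale master_worker_params =
  fixes M N :: nat and L :: "nat \<Rightarrow> real" and u a :: "nat \<Rightarrow> nat \<Rightarrow> real"
  assumes masters_nonempty: "1 \<le> M"
    and L_pos: "m \<in> {1..M} \<Longrightarrow> 0 < L m"
    and u_pos: "m \<in> {1..M} \<Longrightarrow> n \<in> {1..N} \<Longrightarrow> 0 < u m n"
    and a_pos: "m \<in> {1..M} \<Longrightarrow> n \<in> {1..N} \<Longrightarrow> 0 < a m n"
begin

abbreviation v :: "nat \<Rightarrow> nat \<Rightarrow> real" where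
  "v \<equiv> vv L u a"

lemma v_pos: "m \<in> {1..M} \<Longrightarrow> n \<in> {1..N} \<Longrightarrow> 0 < v m n"
  using L_pos u_pos a_pos one_plus_u_phi_pos by (simp add: vv_def)

lemma throughput_eq_L_times_v: "m \<in> {1..M} \<Longrightarrow> throughput (u m n) (a m n) = L m * v m n"
  using L_pos[of m] by (simp add: vv_def throughput_def)

lemma sum_throughput_eq:
  "m \<in> {1..M} \<Longrightarrow> (\<Sum>n = 1..N. k m n * c * throughput (u m n) (a m n)) = c * L m * (\<Sum>n = 1..N. k m n * v m n)"
  by (simp add: throughput_eq_L_times_v sum_distrib_left algebra_simps)

lemma EXm_le:
  assumes "m \<in> {1..M}" "valid_assign M N k" "\<forall>n\<in>{1..N}. 0 \<le> l m n"
  shows "EXm N u a k l m t \<le> max t 0 * L m * (\<Sum>n = 1..N. k m n * v m n)"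
proof -
  have "EXm N u a k l m t \<le> (\<Sum>n = 1..N. k m n * max t 0 * throughput (u m n) (a m n))"
    unfolding EXm_def using assms
    by (intro sum_mono EXmn_le_throughput u_pos a_pos) (auto simp: valid_assign_def)
  then show ?thesis
    using sum_throughput_eq[OF assms(1)] by simp
qed

lemma EXm_at_loads_t_div_phi:
  assumes "m \<in> {1..M}" "valid_assign M N k" "0 < t"
  shows "EXm N u a k (\<lambda>m n. t / phi (u m n) (a m n)) m t = t * L m * (\<Sum>n = 1..N. k m n * v m n)"
proof -
  have "EXm N u a k (\<lambda>m n. t / phi (u m n) (a m n)) m t
      = (\<Sum>n = 1..N. k m n * t * throughput (u m n) (a m n))"
    unfolding EXm_def using assms
    by (intro sum.cong EXmn_at_load_t_div_phi u_pos a_pos) (auto simp: valid_assign_def)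
  then show ?thesis
    using sum_throughput_eq[OF assms(1)] by simp
qed

lemma P2_feasible_bound:
  assumes "P2_feasible M N L u a k l t"
  shows "valid_assign M N k \<and> 0 < P5_obj M N v k \<and> 1 / P5_obj M N v k \<le> t"
proof -
  define S where "S m = (\<Sum>n = 1..N. k m n * v m n)" for m
  have cover: "1 \<le> max t 0 * S m" if m: "m \<in> {1..M}" for m
  proof -
    have "L m \<le> EXm N u a k l m t"
      using assms m by (auto simp: P2_feasible_def)
    also have "\<dots> \<le> L m * (max t 0 * S m)"
      using EXm_le[OF m] assms m by (auto simp: P2_feasible_def S_def algebra_simps)
    finally show ?thesis
      using L_pos[OF m] by simp
  qed
  have "0 < t"
    using cover[of 1] masters_nonempty by (cases "0 < t") auto
  then have "1 / t \<le> S m" if "m \<in> {1..M}" for m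
    using cover[OF that] by (simp add: divide_le_eq mult.commute)
  then have "1 / t \<le> P5_obj M N v k"
    unfolding P5_obj_def S_def[symmetric] using masters_nonempty by (subst Min_ge_iff) auto
  moreover have "0 < 1 / t"
    using \<open>0 < t\<close> by simp
  ultimately have "0 < P5_obj M N v k"
    by linarith
  moreover have "1 / P5_obj M N v k \<le> t"
    using \<open>1 / t \<le> P5_obj M N v k\<close> \<open>0 < t\<close> calculation by (simp add: field_simps)
  ultimately show ?thesis
    using assms by (simp add: P2_feasible_def)
qed

lemma P2_feasible_at_loads_t_div_phi:
  assumes "valid_assign M N k" "0 < P5_obj M N v k"
  defines "t \<equiv> 1 / P5_obj M N v k"
  shows "P2_feasible M N L u a k (\<lambda>m n. t / phi (u m n) (a m n)) t"
proof -
  have "0 < t"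
    using assms(2) by (simp add: t_def)
  have "L m \<le> EXm N u a k (\<lambda>m n. t / phi (u m n) (a m n)) m t" if m: "m \<in> {1..M}" for m
  proof -
    have "P5_obj M N v k \<le> (\<Sum>n = 1..N. k m n * v m n)"
      unfolding P5_obj_def using m by (intro Min_le) auto
    then have "L m \<le> t * L m * (\<Sum>n = 1..N. k m n * v m n)"
      using assms(2) L_pos[OF m] by (simp add: t_def field_simps)
    then show ?thesis
      using EXm_at_loads_t_div_phi[OF m assms(1) \<open>0 < t\<close>] by simp
  qed
  moreover have "0 \<le> t / phi (u m n) (a m n)" if "m \<in> {1..M}" "n \<in> {1..N}" for m n
    using phi_gt[OF u_pos[OF that] a_pos[OF that]] a_pos[OF that] \<open>0 < t\<close> by simp
  ultimately show ?thesis
    using assms(1) by (simp add: P2_feasible_def)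
qed

lemma P2_feasible_attained:
  "valid_assign M N k \<Longrightarrow> 0 < P5_obj M N v k \<Longrightarrow> \<exists>l. P2_feasible M N L u a k l (1 / P5_obj M N v k)"
  using P2_feasible_at_loads_t_div_phi by blast

lemma P5_optimal_pos:
  assumes "M \<le> N" "P5_optimal M N v k"
  shows "0 < P5_obj M N v k"
proof -
  have "0 < P5_obj M N v (\<lambda>m n. if m = n then 1 else 0)"
    using P5_obj_diagonal_pos masters_nonempty assms(1) v_pos by simp
  then show ?thesis
    using assms(2) valid_assign_diagonal unfolding P5_optimal_def by force
qed

end

theorem proposition1:
  fixes M N :: nat and L :: "nat \<Rightarrow> real" and u a :: "nat \<Rightarrow> nat \<Rightarrow> real"
  assumes "1 \<le> M" and "N > M"
    and "\<forall>m\<in>{1..M}. L m > 0"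
    and "\<forall>m\<in>{1..M}. \<forall>n\<in>{1..N}. u m n > 0"
    and "\<forall>m\<in>{1..M}. \<forall>n\<in>{1..N}. a m n > 0"
  shows
    "(\<forall>k. valid_assign M N k \<and> P5_obj M N (vv L u a) k > 0 \<longrightarrow>
        (\<exists>l. P2_feasible M N L u a k l (1 / P5_obj M N (vv L u a) k)) \<and>
        (\<forall>l t. P2_feasible M N L u a k l t \<longrightarrow> 1 / P5_obj M N (vv L u a) k \<le> t))
   \<and> (\<forall>k. valid_assign M N k \<and> \<not> P5_obj M N (vv L u a) k > 0 \<longrightarrow>
        \<not> (\<exists>l t. P2_feasible M N L u a k l t))
   \<and> (\<forall>k. (\<exists>l t. P2_optimal M N L u a k l t) \<longleftrightarrow> P5_optimal M N (vv L u a) k)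
   \<and> (\<exists>k l t. P2_optimal M N L u a k l t)
   \<and> (\<forall>k l t k'. P2_optimal M N L u a k l t \<and> P5_optimal M N (vv L u a) k' \<longrightarrow>
        t = 1 / P5_obj M N (vv L u a) k')"
proof -
  interpret master_worker_params M N L u a
    using assms by unfold_locales auto
  obtain k0 where k0: "P5_optimal M N v k0"
    using P5_optimal_exists[OF masters_nonempty] by blast
  have k0_pos: "0 < P5_obj M N v k0"
    using P5_optimal_pos assms(2) k0 by simp
  note reduction = minimal_time_eq_inverse_maximal_rate
    [where F = "P2_feasible M N L u a" and V = "valid_assign M N" and P = "P5_obj M N v" and kmax = k0]
  note reduction_hyps = P2_feasible_bound P2_feasible_attained k0[unfolded P5_optimal_def] k0_pos
  have "(\<exists>l t. P2_optimal M N L u a k l t) \<longleftrightarrow> P5_optimal M N v k" for k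
    unfolding P2_optimal_def P5_optimal_def by (rule reduction(1)) (fact reduction_hyps)+
  moreover have "\<forall>k l t k'. P2_optimal M N L u a k l t \<and> P5_optimal M N v k' \<longrightarrow>
      t = 1 / P5_obj M N v k'"
    unfolding P2_optimal_def P5_optimal_def by (rule reduction(2)) (fact reduction_hyps)+
  ultimately show ?thesis
    using P2_feasible_bound P2_feasible_attained k0 by blast
qed

end
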